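(* Let $S$ be an inverse semigroup that is a mirror semigroup and is continuous. Then $S$ is separately Scott-continuous.
   Context: An inverse semigroup is a semigroup $S$ in which every $s$ has a unique $s^*$ with $ss^*s=s$ and $s^*ss^*=s^*$. $\Sigma=\Sigma(S)$ is the set of idempotents. The intrinsic order is $s\leqslant t$ iff $s=t\epsilon$ for some idempotent $\epsilon$. A subset is directed if nonempty and any two elements have an upper bound in it. $S$ is a mirror semigroup if every directed subset of $\Sigma$ having a supremum in $(\Sigma,\leqslant)$ also has a supremum in $(S,\leqslant)$. In a poset, $x$ is way-below $y$ ($x\ll y$) if for every directed subset $D$ that has a supremum with $y\leqslant \sup D$, there is $d\in D$ with $x\leqslant d$. A poset is continuous if for every element $s$ the set $\{t : t\ll s\}$ is directed with supremum $s$; $S$ is continuous if $(S,\leqslant)$ is. $S$ is separately Scott-continuous if for every directed $D\subseteq S$ with a supremum $\bigvee D$ in $S$ and every $s\in S$, $\bigvee(Ds)$ exists in $S$ and equals $(\bigvee D)s$. *)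

theory Defs
  imports Main
begin

definition inverse_semigroup :: "'a::semigroup_mult itself \<Rightarrow> bool" where
  "inverse_semigroup _ \<longleftrightarrow> (\<forall>s::'a. \<exists>!t. s * t * s = s \<and> t * s * t = t)"

definition idempotents :: "'a::semigroup_mult set" where
  "idempotents = {e. e * e = e}"

definition intr_le :: "'a::semigroup_mult \<Rightarrow> 'a \<Rightarrow> bool" where
  "intr_le s t \<longleftrightarrow> (\<exists>e\<in>idempotents. s = t * e)"

definition is_upper :: "('a \<Rightarrow> 'a \<Rightarrow> bool) \<Rightarrow> 'a set \<Rightarrow> 'a \<Rightarrow> bool" where
  "is_upper le D u \<longleftrightarrow> (\<forall>d\<in>D. le d u)"

definition is_sup :: "('a \<Rightarrow> 'a \<Rightarrow> bool) \<Rightarrow> 'a set \<Rightarrow> 'a set \<Rightarrow> 'a \<Rightarrow> bool" where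
  "is_sup le P D u \<longleftrightarrow> u \<in> P \<and> is_upper le D u \<and>
     (\<forall>v\<in>P. is_upper le D v \<longrightarrow> le u v)"

definition has_sup :: "('a \<Rightarrow> 'a \<Rightarrow> bool) \<Rightarrow> 'a set \<Rightarrow> 'a set \<Rightarrow> bool" where
  "has_sup le P D \<longleftrightarrow> (\<exists>u. is_sup le P D u)"

definition directed :: "('a \<Rightarrow> 'a \<Rightarrow> bool) \<Rightarrow> 'a set \<Rightarrow> bool" where
  "directed le D \<longleftrightarrow> D \<noteq> {} \<and> (\<forall>x\<in>D. \<forall>y\<in>D. \<exists>z\<in>D. le x z \<and> le y z)"

definition way_below :: "('a \<Rightarrow> 'a \<Rightarrow> bool) \<Rightarrow> 'a set \<Rightarrow> 'a \<Rightarrow> 'a \<Rightarrow> bool" where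
  "way_below le P x y \<longleftrightarrow>
     (\<forall>D u. D \<subseteq> P \<and> directed le D \<and> is_sup le P D u \<and> le y u \<longrightarrow> (\<exists>d\<in>D. le x d))"

definition continuous_poset :: "('a \<Rightarrow> 'a \<Rightarrow> bool) \<Rightarrow> 'a set \<Rightarrow> bool" where
  "continuous_poset le P \<longleftrightarrow>
     (\<forall>s\<in>P. directed le {t\<in>P. way_below le P t s} \<and> is_sup le P {t\<in>P. way_below le P t s} s)"

definition mirror_semigroup :: "'a::semigroup_mult itself \<Rightarrow> bool" where
  "mirror_semigroup _ \<longleftrightarrow>
     (\<forall>D::'a set. D \<subseteq> idempotents \<and> directed intr_le D \<and> has_sup intr_le idempotents D
        \<longrightarrow> has_sup intr_le UNIV D)"

definition continuous_semigroup :: "'a::semigroup_mult itself \<Rightarrow> bool" where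
  "continuous_semigroup _ \<longleftrightarrow> continuous_poset (intr_le :: 'a \<Rightarrow> 'a \<Rightarrow> bool) UNIV"

definition separately_scott_continuous :: "'a::semigroup_mult itself \<Rightarrow> bool" where
  "separately_scott_continuous _ \<longleftrightarrow>
     (\<forall>(D::'a set) u s. directed intr_le D \<and> is_sup intr_le UNIV D u
        \<longrightarrow> is_sup intr_le UNIV ((\<lambda>d. d * s) ` D) (u * s))"

end

theory Submission
  imports Defs
begin

text \<open>Write \<open>s\<^sup>*\<close> for the inverse of \<open>s\<close>. The idempotent \<open>s\<^sup>*s\<close> is the domain of \<open>s\<close>,
  and \<open>s \<le> t\<close> means \<open>s = t s\<^sup>*s\<close>; multiplication is monotone and taking domains preserves
  all suprema. Continuity gives that \<open>f \<mapsto> f e\<close> preserves directed suprema of idempotents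
  \<open>f\<close>: anything way below \<open>f e\<close> lies below some member \<open>g\<close> and below \<open>e\<close>, hence below \<open>g e\<close>.
  For a directed \<open>D\<close> with supremum \<open>u\<close> and an upper bound \<open>v\<close> of \<open>D e\<close>, one gets
  \<open>u y = v y\<close> on the idempotents \<open>y = d\<^sup>*d e\<close>, whose supremum is \<open>u\<^sup>*u e\<close>; this forces
  \<open>u e \<le> v\<close>. A general right factor \<open>s\<close> reduces to the idempotent \<open>e = s s\<^sup>*\<close> via
  \<open>u s = u e s\<close>.\<close>

definition sinv :: "'a::semigroup_mult \<Rightarrow> 'a" where
  "sinv s = (THE t. s * t * s = s \<and> t * s * t = t)"

lemma is_sup_upper: "is_sup le P D u \<Longrightarrow> d \<in> D \<Longrightarrow> le d u"
  by (simp add: is_sup_def is_upper_def)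

lemma is_sup_least: "is_sup le P D u \<Longrightarrow> v \<in> P \<Longrightarrow> is_upper le D v \<Longrightarrow> le u v"
  by (simp add: is_sup_def)

lemma is_sup_UNIV_I:
  "(\<And>d. d \<in> D \<Longrightarrow> le d u) \<Longrightarrow> (\<And>v. is_upper le D v \<Longrightarrow> le u v) \<Longrightarrow> is_sup le UNIV D u"
  by (simp add: is_sup_def is_upper_def)

context
  assumes inverse: "inverse_semigroup TYPE('a::semigroup_mult)"
begin

lemma sinv_unique:
  assumes "(s::'a) * t * s = s" and "t * s * t = t"
  shows "t = sinv s"
proof -
  have "\<exists>!t. s * t * s = s \<and> t * s * t = t"
    using inverse unfolding inverse_semigroup_def by blast
  then show ?thesis
    unfolding sinv_def using assms by (metis (mono_tags, lifting) the_equality)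
qed

lemma sinv_eqs: "(s::'a) * sinv s * s = s \<and> sinv s * s * sinv s = sinv s"
proof -
  have "\<exists>!t. s * t * s = s \<and> t * s * t = t"
    using inverse unfolding inverse_semigroup_def by blast
  then show ?thesis unfolding sinv_def by (rule theI')
qed

lemma mult_sinv_mult [simp]:
  "(s::'a) * sinv s * s = s" "s * (sinv s * s) = s" "s * (sinv s * (s * x)) = s * x"
  using sinv_eqs[of s] by (metis mult.assoc)+

lemma sinv_mult_sinv [simp]:
  "sinv (s::'a) * s * sinv s = sinv s" "sinv s * (s * sinv s) = sinv s"
  "sinv s * (s * (sinv s * x)) = sinv s * x"
  using sinv_eqs[of s] by (metis mult.assoc)+

lemma idempotent_mult:
  assumes e: "(e::'a) * e = e" and f: "f * f = f"
  shows "(e * f) * (e * f) = e * f"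
proof -
  \<comment> \<open>\<open>f x e\<close> is again an inverse of \<open>e f\<close>, so \<open>x = f x e\<close> is idempotent, hence self-inverse.\<close>
  define x where "x = sinv (e * f)"
  have x1: "e * f * x * (e * f) = e * f" and x2: "x * (e * f) * x = x"
    unfolding x_def by simp_all
  have "(e * f) * (f * x * e) * (e * f) = e * f * x * (e * f)"
    by (metis e f mult.assoc)
  then have y1: "(e * f) * (f * x * e) * (e * f) = e * f"
    using x1 by simp
  have "(f * x * e) * (e * f) * (f * x * e) = f * (x * (e * f) * x) * e"
    by (metis e f mult.assoc)
  then have y2: "(f * x * e) * (e * f) * (f * x * e) = f * x * e"
    using x2 by simp
  have x_eq: "x = f * x * e"
    using sinv_unique[OF y1 y2] x_def by simp
  have xx: "x * x = x"
  proof -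
    have "x * x = f * (x * (e * f) * x) * e"
      by (subst (1 2) x_eq) (simp add: mult.assoc)
    then show ?thesis using x2 x_eq by simp
  qed
  have "e * f = sinv x" using sinv_unique[OF x2 x1] .
  moreover have "x = sinv x" using sinv_unique[of x x] xx by simp
  ultimately show ?thesis using xx by simp
qed

lemma idempotents_commute:
  assumes e: "(e::'a) * e = e" and f: "f * f = f"
  shows "e * f = f * e"
proof -
  have ef: "(e * f) * (e * f) = e * f" and fe: "(f * e) * (f * e) = f * e"
    using idempotent_mult e f by blast+
  have "(e * f) * (f * e) * (e * f) = (e * f) * (e * f)"
    using e f by (metis mult.assoc)
  then have c1: "(e * f) * (f * e) * (e * f) = e * f" using ef by simp
  have "(f * e) * (e * f) * (f * e) = (f * e) * (f * e)"
    using e f by (metis mult.assoc)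
  then have c2: "(f * e) * (e * f) * (f * e) = f * e" using fe by simp
  have "f * e = sinv (e * f)" using sinv_unique[OF c1 c2] .
  moreover have "e * f = sinv (e * f)" using sinv_unique[of "e * f" "e * f"] ef by simp
  ultimately show ?thesis by simp
qed

lemma idempotent_sinv_mult [simp]: "(sinv (s::'a) * s) * (sinv s * s) = sinv s * s"
  by (metis mult.assoc sinv_mult_sinv(1))

lemma idempotent_mult_sinv [simp]: "((s::'a) * sinv s) * (s * sinv s) = s * sinv s"
  by (metis mult.assoc mult_sinv_mult(1))

lemma sinv_idempotent: "(e::'a) * e = e \<Longrightarrow> sinv e = e"
  using sinv_unique[of e e] by simp

lemma sinv_mult: "sinv ((s::'a) * t) = sinv t * sinv s"
proof -
  have c: "(t * sinv t) * (sinv s * s) = (sinv s * s) * (t * sinv t)"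
    by (rule idempotents_commute) simp_all
  have "(s * t) * (sinv t * sinv s) * (s * t) = s * ((t * sinv t) * (sinv s * s)) * t"
    by (simp add: mult.assoc)
  also have "\<dots> = s * ((sinv s * s) * (t * sinv t)) * t"
    using c by simp
  also have "\<dots> = (s * sinv s * s) * (t * sinv t * t)"
    by (simp add: mult.assoc)
  finally have 1: "(s * t) * (sinv t * sinv s) * (s * t) = s * t" by simp
  have "(sinv t * sinv s) * (s * t) * (sinv t * sinv s)
      = sinv t * ((sinv s * s) * (t * sinv t)) * sinv s"
    by (simp add: mult.assoc)
  also have "\<dots> = sinv t * ((t * sinv t) * (sinv s * s)) * sinv s"
    using c by simp
  also have "\<dots> = (sinv t * t * sinv t) * (sinv s * s * sinv s)"
    by (simp add: mult.assoc)
  finally have 2: "(sinv t * sinv s) * (s * t) * (sinv t * sinv s) = sinv t * sinv s" by simp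
  show ?thesis using sinv_unique[OF 1 2] by simp
qed

lemma idempotent_mult_absorb: "(e::'a) * e = e \<Longrightarrow> e * (e * x) = e * x"
  by (metis mult.assoc)

lemma sinv_mult_idempotent:
  assumes e: "(e::'a) * e = e"
  shows "sinv (t * e) * (t * e) = sinv t * t * e"
proof -
  have "sinv (t * e) * (t * e) = e * (sinv t * t) * e"
    using sinv_mult[of t e] sinv_idempotent[OF e] by (simp add: mult.assoc)
  also have "\<dots> = (sinv t * t) * e * e"
    using idempotents_commute[OF e, of "sinv t * t"] by simp
  finally show ?thesis using e by (simp add: mult.assoc)
qed

lemma intr_le_iff_mult_right: "intr_le (s::'a) t \<longleftrightarrow> s = t * (sinv s * s)"
proof
  assume "intr_le s t"
  then obtain e where e: "e * e = e" "s = t * e"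
    by (auto simp: intr_le_def idempotents_def)
  then have "t * (sinv s * s) = (t * sinv t * t) * e"
    using sinv_mult_idempotent[OF e(1), of t] by (simp add: mult.assoc)
  then show "s = t * (sinv s * s)" using e by simp
next
  assume "s = t * (sinv s * s)"
  then show "intr_le s t"
    unfolding intr_le_def idempotents_def by (intro bexI[of _ "sinv s * s"]) auto
qed

lemma intr_le_iff_idempotent_left: "intr_le (s::'a) t \<longleftrightarrow> (\<exists>f. f * f = f \<and> s = f * t)"
proof
  assume "intr_le s t"
  then obtain e where e: "e * e = e" "s = t * e"
    by (auto simp: intr_le_def idempotents_def)
  have c: "e * (sinv t * t) = (sinv t * t) * e"
    by (rule idempotents_commute) (simp_all add: e)
  have "(t * e * sinv t) * (t * e * sinv t) = t * (e * (sinv t * t)) * e * sinv t"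
    by (simp add: mult.assoc)
  also have "\<dots> = (t * sinv t * t) * (e * e) * sinv t"
    using c by (simp add: mult.assoc)
  finally have "(t * e * sinv t) * (t * e * sinv t) = t * e * sinv t"
    using e by simp
  moreover have "(t * e * sinv t) * t = s"
  proof -
    have "(t * e * sinv t) * t = t * (e * (sinv t * t))" by (simp add: mult.assoc)
    also have "\<dots> = (t * sinv t * t) * e" using c by (simp add: mult.assoc)
    finally show ?thesis using e by simp
  qed
  ultimately show "\<exists>f. f * f = f \<and> s = f * t" by metis
next
  assume "\<exists>f. f * f = f \<and> s = f * t"
  then obtain f where f: "f * f = f" "s = f * t" by blast
  have c: "f * (t * sinv t) = (t * sinv t) * f"
    by (rule idempotents_commute) (simp_all add: f)
  have "sinv s * s = sinv t * f * t"
    using f sinv_mult[of f t] sinv_idempotent[of f] by (simp add: mult.assoc idempotent_mult_absorb)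
  then have "t * (sinv s * s) = (f * (t * sinv t)) * t" using c by (simp add: mult.assoc)
  also have "\<dots> = f * (t * sinv t * t)" by (simp add: mult.assoc)
  finally show "intr_le s t" using f intr_le_iff_mult_right by simp
qed

lemma intr_le_refl: "intr_le (s::'a) s"
  using intr_le_iff_mult_right by simp

lemma intr_le_trans: "intr_le (s::'a) t \<Longrightarrow> intr_le t r \<Longrightarrow> intr_le s r"
proof -
  assume "intr_le s t" "intr_le t r"
  then obtain e f where "e * e = e" "s = t * e" "f * f = f" "t = r * f"
    by (auto simp: intr_le_def idempotents_def)
  then have "s = r * (f * e)" "(f * e) * (f * e) = f * e"
    using idempotent_mult[of f e] by (auto simp: mult.assoc)
  then show ?thesis unfolding intr_le_def idempotents_def by blast
qed

lemma intr_le_mult_right: "intr_le (s::'a) t \<Longrightarrow> intr_le (s * a) (t * a)"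
  unfolding intr_le_iff_idempotent_left by (auto simp: mult.assoc)

lemma intr_le_mult_left: "intr_le (s::'a) t \<Longrightarrow> intr_le (a * s) (a * t)"
  unfolding intr_le_def by (auto simp: mult.assoc)

lemma idempotent_mult_intr_le: "(f::'a) * f = f \<Longrightarrow> intr_le (f * b) b"
  using intr_le_iff_idempotent_left by blast

lemma mult_idempotent_intr_le: "(f::'a) * f = f \<Longrightarrow> intr_le (b * f) b"
  unfolding intr_le_def idempotents_def by blast

lemma intr_le_sinv: "intr_le (s::'a) t \<Longrightarrow> intr_le (sinv s) (sinv t)"
proof -
  assume "intr_le s t"
  then obtain e where "e * e = e" "s = t * e"
    unfolding intr_le_def idempotents_def by blast
  then have "e * e = e" "sinv s = e * sinv t"
    using sinv_mult[of t e] sinv_idempotent[of e] by auto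
  then show ?thesis using intr_le_iff_idempotent_left by blast
qed

lemma intr_le_idempotent_imp_idempotent: "intr_le (s::'a) e \<Longrightarrow> e * e = e \<Longrightarrow> s * s = s"
  unfolding intr_le_def idempotents_def using idempotent_mult by blast

lemma idempotent_intr_le_iff:
  assumes t: "(t::'a) * t = t" and g: "g * g = g"
  shows "intr_le t g \<longleftrightarrow> t = g * t"
proof
  assume "intr_le t g"
  then obtain f where "t = g * f" unfolding intr_le_def by blast
  then show "t = g * t" using g by (simp add: idempotent_mult_absorb)
next
  assume "t = g * t"
  then show "intr_le t g"
    unfolding intr_le_def idempotents_def using t by blast
qed

lemma way_below_imp_intr_le: "way_below intr_le UNIV (t::'a) x \<Longrightarrow> intr_le t x"
  unfolding way_below_def
  by (drule spec[of _ "{x}"], drule spec[of _ x])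
     (auto simp: directed_def is_sup_def is_upper_def intr_le_refl)

lemma intr_le_domain_mono: "intr_le (s::'a) t \<Longrightarrow> intr_le (sinv s * s) (sinv t * t)"
  by (meson intr_le_mult_left intr_le_mult_right intr_le_sinv intr_le_trans)

lemma directed_image_domain:
  "directed intr_le (D::'a set) \<Longrightarrow> directed intr_le ((\<lambda>d. sinv d * d) ` D)"
  using intr_le_domain_mono unfolding directed_def by blast

lemma is_sup_image_domain:
  assumes sup: "is_sup intr_le UNIV A (a::'a)"
  shows "is_sup intr_le UNIV ((\<lambda>d. sinv d * d) ` A) (sinv a * a)"
proof (rule is_sup_UNIV_I)
  fix x assume "x \<in> (\<lambda>d. sinv d * d) ` A"
  then show "intr_le x (sinv a * a)"
    using is_sup_upper[OF sup] intr_le_domain_mono by blast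
next
  fix b assume b: "is_upper intr_le ((\<lambda>d. sinv d * d) ` A) b"
  have "intr_le d (a * b)" if "d \<in> A" for d
  proof -
    have "intr_le (d * (sinv d * d)) (d * b)"
      using b that unfolding is_upper_def by (blast intro: intr_le_mult_left)
    then show ?thesis
      using intr_le_mult_right[OF is_sup_upper[OF sup that]] by (simp add: intr_le_trans)
  qed
  then have "intr_le a (a * b)"
    using is_sup_least[OF sup] unfolding is_upper_def by blast
  then obtain f where f: "f * f = f" "a = f * (a * b)"
    using intr_le_iff_idempotent_left by blast
  then have "a = a * b"
    by (metis idempotent_mult_absorb mult.assoc)
  then have "sinv a * a = (sinv a * a) * b"
    by (metis mult.assoc)
  then show "intr_le (sinv a * a) b"
    by (metis idempotent_mult_intr_le idempotent_sinv_mult)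
qed

lemma continuous_is_sup_idempotents_mult:
  assumes cont: "continuous_semigroup TYPE('a)"
    and dir: "directed intr_le F" and sup: "is_sup intr_le UNIV F (f::'a)"
    and f: "f * f = f" and e: "e * e = e"
  shows "is_sup intr_le UNIV ((\<lambda>g. g * e) ` F) (f * e)"
proof (rule is_sup_UNIV_I)
  fix x assume "x \<in> (\<lambda>g. g * e) ` F"
  then show "intr_le x (f * e)"
    using is_sup_upper[OF sup] intr_le_mult_right by blast
next
  fix b assume b: "is_upper intr_le ((\<lambda>g. g * e) ` F) b"
  have fe: "(f * e) * (f * e) = f * e" using idempotent_mult[OF f e] .
  have "intr_le t b" if wb: "way_below intr_le UNIV t (f * e)" for t
  proof -
    have t_fe: "intr_le t (f * e)" using way_below_imp_intr_le[OF wb] .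
    obtain g where g: "g \<in> F" "intr_le t g"
      using wb dir sup mult_idempotent_intr_le[OF e, of f] unfolding way_below_def by blast
    have gg: "g * g = g"
      using intr_le_idempotent_imp_idempotent[OF is_sup_upper[OF sup g(1)] f] .
    have tt: "t * t = t" using intr_le_idempotent_imp_idempotent[OF t_fe fe] .
    have "t = (f * e) * t" "t = g * t"
      using idempotent_intr_le_iff[OF tt fe] idempotent_intr_le_iff[OF tt gg] t_fe g(2) by blast+
    then have "t = (g * e) * t"
      using idempotents_commute[OF f e] e by (metis mult.assoc)
    then have "intr_le t (g * e)"
      using idempotent_intr_le_iff[OF tt idempotent_mult[OF gg e]] by simp
    then show ?thesis
      using b g(1) unfolding is_upper_def by (blast intro: intr_le_trans)
  qed
  moreover have "is_sup intr_le UNIV {t\<in>UNIV. way_below intr_le UNIV t (f * e)} (f * e)"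
    using cont unfolding continuous_semigroup_def continuous_poset_def by blast
  ultimately show "intr_le (f * e) b"
    by (simp add: is_sup_def is_upper_def)
qed

lemma continuous_sup_mult_idempotent_le:
  assumes cont: "continuous_semigroup TYPE('a)"
    and dir: "directed intr_le D" and sup: "is_sup intr_le UNIV D (u::'a)"
    and e: "e * e = e" and v: "\<And>d. d \<in> D \<Longrightarrow> intr_le (d * e) v"
  shows "intr_le (u * e) v"
proof -
  define x where "x = sinv u * u * e"
  have x_sup: "is_sup intr_le UNIV ((\<lambda>g. g * e) ` (\<lambda>d. sinv d * d) ` D) x"
    unfolding x_def
    by (rule continuous_is_sup_idempotents_mult
        [OF cont directed_image_domain[OF dir] is_sup_image_domain[OF sup] _ e]) simp
  have xx: "x * x = x" unfolding x_def using idempotent_mult[OF _ e] by simp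
  have "intr_le (sinv d * d * e) (sinv u * v * x)" if d: "d \<in> D" for d
  proof -
    define y where "y = sinv d * d * e"
    have yy: "y * y = y" unfolding y_def using idempotent_mult[OF _ e] by simp
    have "d = u * (sinv d * d)"
      using is_sup_upper[OF sup d] intr_le_iff_mult_right by blast
    then have "d * e = (u * (sinv d * d)) * e" by (rule arg_cong)
    then have uy: "d * e = u * y" unfolding y_def by (simp only: mult.assoc)
    have "d * e = v * (sinv (d * e) * (d * e))"
      using v[OF d] intr_le_iff_mult_right by blast
    then have vy: "d * e = v * y" unfolding y_def sinv_mult_idempotent[OF e] .
    have "sinv d * d = (sinv u * u) * (sinv d * d)"
      using idempotent_intr_le_iff intr_le_domain_mono[OF is_sup_upper[OF sup d]] by simp
    then have "y = sinv u * (u * y)"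
      unfolding y_def by (metis mult.assoc)
    also have "\<dots> = sinv u * (v * y)" using uy vy by simp
    also have "\<dots> = (sinv u * v * x) * y"
    proof -
      have "intr_le y x" using is_sup_upper[OF x_sup] d unfolding y_def by blast
      then have "y = x * y" using idempotent_intr_le_iff[OF yy xx] by blast
      then show ?thesis by (metis mult.assoc)
    qed
    finally show ?thesis
      unfolding y_def[symmetric] intr_le_def idempotents_def using yy by blast
  qed
  then have "intr_le x (sinv u * v * x)"
    using is_sup_least[OF x_sup] unfolding is_upper_def by blast
  then have "x = (sinv u * v * x) * (sinv x * x)"
    using intr_le_iff_mult_right by blast
  then have x_eq: "x = sinv u * v * x"
    using sinv_idempotent[OF xx] xx by (simp add: mult.assoc)
  have "u * e = u * x" unfolding x_def by (simp add: mult.assoc)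
  also have "\<dots> = (u * sinv u) * (v * x)"
    by (subst x_eq) (simp add: mult.assoc)
  finally have "intr_le (u * e) (v * x)"
    using idempotent_mult_intr_le[OF idempotent_mult_sinv] by simp
  then show ?thesis
    using mult_idempotent_intr_le[OF xx] intr_le_trans by blast
qed

lemma continuous_imp_separately_scott_continuous:
  assumes cont: "continuous_semigroup TYPE('a)"
  shows "separately_scott_continuous TYPE('a)"
  unfolding separately_scott_continuous_def
proof (intro allI impI)
  fix D :: "'a set" and u s
  assume "directed intr_le D \<and> is_sup intr_le UNIV D u"
  then have dir: "directed intr_le D" and sup: "is_sup intr_le UNIV D u" by auto
  show "is_sup intr_le UNIV ((\<lambda>d. d * s) ` D) (u * s)"
  proof (rule is_sup_UNIV_I)
    fix x assume "x \<in> (\<lambda>d. d * s) ` D"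
    then show "intr_le x (u * s)"
      using is_sup_upper[OF sup] intr_le_mult_right by blast
  next
    fix v assume v: "is_upper intr_le ((\<lambda>d. d * s) ` D) v"
    have "intr_le (d * (s * sinv s)) (v * sinv s)" if "d \<in> D" for d
      using v that intr_le_mult_right[of "d * s" v "sinv s"]
      unfolding is_upper_def by (simp add: mult.assoc)
    then have "intr_le (u * (s * sinv s)) (v * sinv s)"
      using continuous_sup_mult_idempotent_le[OF cont dir sup idempotent_mult_sinv] by blast
    then have "intr_le (u * (s * sinv s) * s) (v * sinv s * s)"
      by (rule intr_le_mult_right)
    then have "intr_le (u * s) (v * (sinv s * s))"
      by (simp add: mult.assoc)
    then show "intr_le (u * s) v"
      using mult_idempotent_intr_le[OF idempotent_sinv_mult] intr_le_trans by blast
  qed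
qed

end

theorem lemma5p1:
  assumes "inverse_semigroup TYPE('a::semigroup_mult)"
    and "mirror_semigroup TYPE('a)"
    and "continuous_semigroup TYPE('a)"
  shows "separately_scott_continuous TYPE('a)"
  using continuous_imp_separately_scott_continuous[OF assms(1) assms(3)] .

end
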